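(* Let $s=a_1a_2\cdots a_n$ be a permutation of $[n]$ in one-line form, and let $\bar s=(0,a_1,a_2,\ldots,a_n)$ and $p_t=(n,n-1,\ldots,1,0)$, both $(n+1)$-cycles on $[n]^*=\{0,1,\ldots,n\}$. Then $$td(s)\ \ge\ \max_{\gamma}\ \frac{\max\{|C(p_t\bar s\gamma)-C(\gamma)|,\ |C_{odd}(p_t\bar s\gamma)-C_{odd}(\gamma)|,\ |C_{ev}(p_t\bar s\gamma)-C_{ev}(\gamma)|\}}{2},$$ where $\gamma$ ranges over all permutations of $[n]^*$.
   Context: Permutations are multiplied as composition of maps, $(\sigma\tau)(x)=\sigma(\tau(x))$. For a permutation $\pi$, $C(\pi)$, $C_{odd}(\pi)$ and $C_{ev}(\pi)$ denote the number of cycles, of odd-length cycles and of even-length cycles of $\pi$ (fixed points counted as cycles of length $1$). A transposition acting on a sequence $a_1\cdots a_n$ replaces it by $a_1\cdots a_{i-1}a_{j+1}\cdots a_k a_i\cdots a_j a_{k+1}\cdots a_n$ for some $1\le i\le j<k\le n$ (interchanging two adjacent blocks). The transposition distance $td(s)$ is the minimum number of transpositions needed to transform $s$ into $e_n=12\cdots n$. *)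

theory Defs
  imports "HOL-Combinatorics.Combinatorics"
begin

definition perm_cycles :: "('a \<Rightarrow> 'a) \<Rightarrow> 'a set \<Rightarrow> 'a set set" where
  "perm_cycles p A = (\<lambda>x. orbit p x) ` A"

definition num_cycles :: "('a \<Rightarrow> 'a) \<Rightarrow> 'a set \<Rightarrow> nat" where
  "num_cycles p A = card (perm_cycles p A)"

definition num_odd_cycles :: "('a \<Rightarrow> 'a) \<Rightarrow> 'a set \<Rightarrow> nat" where
  "num_odd_cycles p A = card {c \<in> perm_cycles p A. odd (card c)}"

definition num_even_cycles :: "('a \<Rightarrow> 'a) \<Rightarrow> 'a set \<Rightarrow> nat" where
  "num_even_cycles p A = card {c \<in> perm_cycles p A. even (card c)}"

text \<open>A transposition (block interchange) on a sequence a_1 ... a_n, with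
  1 \<le> i \<le> j < k \<le> n: result a_1..a_{i-1} a_{j+1}..a_k a_i..a_j a_{k+1}..a_n.\<close>
definition block_transp :: "nat \<Rightarrow> nat \<Rightarrow> nat \<Rightarrow> 'a list \<Rightarrow> 'a list" where
  "block_transp i j k s =
     take (i - 1) s @ drop j (take k s) @ drop (i - 1) (take j s) @ drop k s"

definition transp_step :: "'a list \<Rightarrow> 'a list \<Rightarrow> bool" where
  "transp_step s t \<longleftrightarrow>
     (\<exists>i j k. 1 \<le> i \<and> i \<le> j \<and> j < k \<and> k \<le> length s \<and> t = block_transp i j k s)"

definition td :: "nat list \<Rightarrow> nat" where
  "td s = (LEAST m. (transp_step ^^ m) s [1..<length s + 1])"

end

theory Submission
  imports Defs
begin

text \<open>
  Write sbar for the cycle (0 a1 ... an). A block interchange of s turns sbar into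
  sbar o sigma, where sigma is the 3-cycle through the last entries of the fixed prefix
  (0 a1 ... a(i-1)) and of the two interchanged blocks; so p_t o sbar o gamma is multiplied on
  the right by the conjugate 3-cycle gamma^-1 o sigma o gamma. Right multiplication by a
  3-cycle only affects the at most three cycles through its points, and if these are three
  distinct cycles they merge into one. Merging three disjoint cycles preserves "arbitrary",
  "odd" and "even" length, so each of the three cycle counts changes by at most 2 per
  transposition. After td s transpositions s becomes e_n, for which p_t o sbar = id, and the
  counts are those of gamma.
\<close>

section \<open>Cycles given by lists\<close>

lemma cycle_of_list_Cons_self:
  assumes "distinct (a # ys)"
  shows "cycle_of_list (a # ys) a = hd (ys @ [a])"
  using assms by (cases ys) (simp_all add: id_outside_supp)

lemma cycle_of_list_next:
  assumes "distinct (xs @ a # ys)"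
  shows "cycle_of_list (xs @ a # ys) a = hd (ys @ xs @ [a])"
proof -
  have "cycle_of_list (xs @ a # ys) = cycle_of_list (rotate (length xs) (xs @ a # ys))"
    using assms by (rule cycle_of_list_rotate_independent)
  also have "rotate (length xs) (xs @ a # ys) = a # ys @ xs"
    by (simp add: rotate_append)
  finally show ?thesis
    using assms cycle_of_list_Cons_self[of a "ys @ xs"] by auto
qed

lemma cycle_of_list_rev_comp:
  assumes "distinct L"
  shows "cycle_of_list (rev L) \<circ> cycle_of_list L = id"
proof
  fix e
  show "(cycle_of_list (rev L) \<circ> cycle_of_list L) e = id e"
  proof (cases "e \<in> set L")
    case False
    then show ?thesis by (simp add: id_outside_supp)
  next
    case True
    then obtain xs ys where L: "L = xs @ e # ys" by (metis split_list)
    have d: "distinct (rev L)" using assms by simp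
    show ?thesis
    proof (cases ys)
      case (Cons c ys')
      have "rev L = rev ys' @ c # e # rev xs" using L Cons by simp
      then show ?thesis
        using assms d cycle_of_list_next[of xs e ys] cycle_of_list_next[of "rev ys'" c "e # rev xs"]
        unfolding L Cons by simp
    next
      case Nil
      show ?thesis
      proof (cases xs)
        case (Cons c xs')
        have "rev L = (e # rev xs') @ [c]" using L Nil Cons by simp
        then show ?thesis
          using assms d cycle_of_list_next[of xs e ys] cycle_of_list_next[of "e # rev xs'" c "[]"]
          unfolding L Nil Cons by simp
      qed (simp add: L Nil)
    qed
  qed
qed

lemma cycle_of_list_3:
  assumes "distinct [x, y, z]"
  shows "cycle_of_list [x, y, z] x = y" "cycle_of_list [x, y, z] y = z"
    "cycle_of_list [x, y, z] z = x" "e \<notin> {x, y, z} \<Longrightarrow> cycle_of_list [x, y, z] e = e"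
  using assms by (auto simp: id_outside_supp)

lemma cycle_of_list_swap_blocks_other:
  assumes d: "distinct (Q @ B1 @ B2 @ R)" and ne: "Q \<noteq> []"
    and e: "e \<notin> {last Q, last B1, last B2}"
  shows "cycle_of_list (Q @ B2 @ B1 @ R) e = cycle_of_list (Q @ B1 @ B2 @ R) e"
proof (cases "e \<in> set (Q @ B1 @ B2 @ R)")
  case False
  then show ?thesis by (simp add: id_outside_supp)
next
  case True
  have d': "distinct (Q @ B2 @ B1 @ R)" using d by auto
  consider "e \<in> set Q" | "e \<in> set B1" | "e \<in> set B2" | "e \<in> set R"
    using True by auto
  then show ?thesis
  proof cases
    case 1
    then obtain q1 q2 where q: "Q = q1 @ e # q2" by (metis split_list)
    have "q2 \<noteq> []" using q e by auto
    then show ?thesis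
      using cycle_of_list_next[of q1 e "q2 @ B2 @ B1 @ R"]
        cycle_of_list_next[of q1 e "q2 @ B1 @ B2 @ R"] d d' unfolding q by simp
  next
    case 2
    then obtain q1 q2 where q: "B1 = q1 @ e # q2" by (metis split_list)
    have "q2 \<noteq> []" using q e by auto
    then show ?thesis
      using cycle_of_list_next[of "Q @ B2 @ q1" e "q2 @ R"]
        cycle_of_list_next[of "Q @ q1" e "q2 @ B2 @ R"] d d' unfolding q by simp
  next
    case 3
    then obtain q1 q2 where q: "B2 = q1 @ e # q2" by (metis split_list)
    have "q2 \<noteq> []" using q e by auto
    then show ?thesis
      using cycle_of_list_next[of "Q @ q1" e "q2 @ B1 @ R"]
        cycle_of_list_next[of "Q @ B1 @ q1" e "q2 @ R"] d d' unfolding q by simp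
  next
    case 4
    then obtain q1 q2 where q: "R = q1 @ e # q2" by (metis split_list)
    have "hd (q2 @ Q @ W) = hd (q2 @ Q)" for W using ne by (cases q2) auto
    then show ?thesis
      using cycle_of_list_next[of "Q @ B2 @ B1 @ q1" e q2]
        cycle_of_list_next[of "Q @ B1 @ B2 @ q1" e q2] d d'
      unfolding q by (metis append.assoc)
  qed
qed

lemma cycle_of_list_swap_blocks:
  assumes d: "distinct (Q @ B1 @ B2 @ R)" and ne: "Q \<noteq> []" "B1 \<noteq> []" "B2 \<noteq> []"
  shows "cycle_of_list (Q @ B2 @ B1 @ R) =
    cycle_of_list (Q @ B1 @ B2 @ R) \<circ> cycle_of_list [last Q, last B1, last B2]"
proof
  fix e
  obtain Q0 x where Q: "Q = Q0 @ [x]" using ne(1) by (metis append_butlast_last_id)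
  obtain B10 y where B1: "B1 = B10 @ [y]" using ne(2) by (metis append_butlast_last_id)
  obtain B20 z where B2: "B2 = B20 @ [z]" using ne(3) by (metis append_butlast_last_id)
  have lasts: "last Q = x" "last B1 = y" "last B2 = z" using Q B1 B2 by simp_all
  have "distinct [x, y, z]" using d unfolding Q B1 B2 by auto
  note c3 = cycle_of_list_3[OF this]
  have d': "distinct (Q @ B2 @ B1 @ R)" using d by auto
  have "cycle_of_list (Q @ B2 @ B1 @ R) e = cycle_of_list (Q @ B1 @ B2 @ R) (cycle_of_list [x, y, z] e)"
  proof -
    consider "e = x" | "e = y" | "e = z" | "e \<notin> {x, y, z}" by blast
    then show ?thesis
    proof cases
      case 1
      show ?thesis unfolding 1 c3(1)
        using cycle_of_list_next[of Q0 x "B2 @ B1 @ R"] cycle_of_list_next[of "Q @ B10" y "B2 @ R"]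
          d d' ne unfolding Q B1 by (simp add: hd_append)
    next
      case 2
      have "hd (R @ Q @ W) = hd (R @ Q)" for W using ne(1) by (cases R) auto
      then show ?thesis unfolding 2 c3(2)
        using cycle_of_list_next[of "Q @ B2 @ B10" y R] cycle_of_list_next[of "Q @ B1 @ B20" z R]
          d d' unfolding B1 B2 by simp
    next
      case 3
      show ?thesis unfolding 3 c3(3)
        using cycle_of_list_next[of "Q @ B20" z "B1 @ R"] cycle_of_list_next[of Q0 x "B1 @ B2 @ R"]
          d d' ne unfolding Q B2 by (simp add: hd_append)
    next
      case 4
      then show ?thesis
        using cycle_of_list_swap_blocks_other[OF d ne(1)] c3(4) unfolding lasts by simp
    qed
  qed
  then show "cycle_of_list (Q @ B2 @ B1 @ R) e =
      (cycle_of_list (Q @ B1 @ B2 @ R) \<circ> cycle_of_list [last Q, last B1, last B2]) e"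
    unfolding lasts by simp
qed

section \<open>Right multiplication by a 3-cycle\<close>

lemma orbit_eq_of_mem:
  assumes "permutation f" "y \<in> orbit f x"
  shows "orbit f y = orbit f x"
  using orbit_cyclic_eq3[OF cyclic_on_orbit'[OF assms(1)] assms(2)] .

lemma orbits_disjoint:
  assumes "permutation f" "orbit f x \<noteq> orbit f y"
  shows "orbit f x \<inter> orbit f y = {}"
  using assms orbit_eq_of_mem by (metis disjoint_iff)

lemma orbit_subset_if_enters:
  assumes "g a = f b" and "\<forall>y\<in>orbit f b. y \<noteq> b \<longrightarrow> g y = f y"
  shows "orbit f b \<subseteq> orbit g a"
proof
  fix y assume "y \<in> orbit f b"
  then show "y \<in> orbit g a"
  proof induct
    case base
    then show ?case using assms(1) orbit.base[of g a] by simp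
  next
    case (step y)
    then show ?case
      using assms orbit.base[of g a] orbit.step[of y g a] by (cases "y = b") auto
  qed
qed

lemma orbits_merge:
  assumes pf: "permutation f" and pg: "permutation g"
    and dist: "orbit f u \<noteq> orbit f v" "orbit f v \<noteq> orbit f w" "orbit f u \<noteq> orbit f w"
    and agree: "\<And>e. e \<notin> {u, v, w} \<Longrightarrow> g e = f e"
    and rot: "g u = f v" "g v = f w" "g w = f u"
  shows "orbit g ` {u, v, w} = {orbit f u \<union> orbit f v \<union> orbit f w}"
proof -
  have not_in: "u \<notin> orbit f v" "u \<notin> orbit f w" "v \<notin> orbit f u"
    "v \<notin> orbit f w" "w \<notin> orbit f u" "w \<notin> orbit f v"
    using dist orbit_eq_of_mem[OF pf] by metis+
  have "orbit f v \<subseteq> orbit g u"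
    using not_in by (intro orbit_subset_if_enters rot ballI impI agree) blast
  moreover have "orbit f w \<subseteq> orbit g v"
    using not_in by (intro orbit_subset_if_enters rot ballI impI agree) blast
  moreover have "orbit f u \<subseteq> orbit g w"
    using not_in by (intro orbit_subset_if_enters rot ballI impI agree) blast
  ultimately have "v \<in> orbit g u" "w \<in> orbit g v"
    using permutation_self_in_orbit[OF pf] by blast+
  then have gorb: "orbit g v = orbit g u" "orbit g w = orbit g u"
    using orbit_eq_of_mem[OF pg] by metis+
  have "orbit g u \<subseteq> orbit f u \<union> orbit f v \<union> orbit f w"
  proof
    fix y assume "y \<in> orbit g u"
    then show "y \<in> orbit f u \<union> orbit f v \<union> orbit f w"
    proof induct
      case base
      then show ?case using rot(1) orbit.base[of f v] by simp
    next
      case (step y)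
      then show ?case
        using rot agree[of y] orbit.base[of f] orbit.step[of y f] by (cases "y \<in> {u, v, w}") auto
    qed
  qed
  with \<open>orbit f v \<subseteq> orbit g u\<close> \<open>orbit f w \<subseteq> orbit g v\<close> \<open>orbit f u \<subseteq> orbit g w\<close> gorb
  have "orbit g u = orbit f u \<union> orbit f v \<union> orbit f w" by blast
  then show ?thesis using gorb by auto
qed

lemma orbit_eq_if_disjoint:
  assumes "permutation f" "\<And>e. e \<notin> D \<Longrightarrow> g e = f e" "orbit f x \<inter> D = {}"
  shows "orbit g x = orbit f x"
  using assms by (intro orbit_cong permutation_self_in_orbit) auto

lemma filter_orbits_disjoint_subset:
  assumes "permutation f" "\<And>e. e \<notin> D \<Longrightarrow> g e = f e"
  shows "{C \<in> orbit f ` A. C \<inter> D = {} \<and> P C} \<subseteq> {C \<in> orbit g ` A. C \<inter> D = {} \<and> P C}"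
proof
  fix C assume "C \<in> {C \<in> orbit f ` A. C \<inter> D = {} \<and> P C}"
  then obtain x where x: "x \<in> A" "C = orbit f x" "C \<inter> D = {}" "P C" by blast
  then have "orbit g x = C" using orbit_eq_if_disjoint[OF assms] by simp
  with x show "C \<in> {C \<in> orbit g ` A. C \<inter> D = {} \<and> P C}" by blast
qed

lemma card_filter_orbits_split:
  assumes "permutation h" "finite A" "D \<subseteq> A"
  shows "card {C \<in> orbit h ` A. P C} =
    card {C \<in> orbit h ` A. C \<inter> D = {} \<and> P C} + card {C \<in> orbit h ` D. P C}"
proof -
  have "{C \<in> orbit h ` A. P C} = {C \<in> orbit h ` A. C \<inter> D = {} \<and> P C} \<union> {C \<in> orbit h ` D. P C}"
    using assms(3) orbit_eq_of_mem[OF assms(1)] by blast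
  moreover have "{C \<in> orbit h ` A. C \<inter> D = {} \<and> P C} \<inter> {C \<in> orbit h ` D. P C} = {}"
    using permutation_self_in_orbit[OF assms(1)] by blast
  moreover have "finite (orbit h ` D)" using assms(2,3) finite_subset by blast
  ultimately show ?thesis using assms(2) by (simp add: card_Un_disjoint)
qed

lemma card_filter_orbits_le_3: "card {C \<in> orbit h ` {u, v, w}. P C} \<le> 3"
proof -
  have "card {C \<in> orbit h ` {u, v, w}. P C} \<le> card (orbit h ` {u, v, w})"
    by (intro card_mono) auto
  also have "\<dots> \<le> 3" by (simp add: card_insert_if)
  finally show ?thesis .
qed

definition union3_closed :: "('a set \<Rightarrow> bool) \<Rightarrow> bool" where
  "union3_closed P \<longleftrightarrow> (\<forall>X Y Z. finite X \<longrightarrow> finite Y \<longrightarrow> finite Z \<longrightarrow>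
     X \<inter> Y = {} \<longrightarrow> Y \<inter> Z = {} \<longrightarrow> X \<inter> Z = {} \<longrightarrow> P X \<longrightarrow> P Y \<longrightarrow> P Z \<longrightarrow> P (X \<union> Y \<union> Z))"

lemma union3_closed_True: "union3_closed (\<lambda>_. True)"
  by (simp add: union3_closed_def)

lemma union3_closed_odd_card: "union3_closed (\<lambda>C. odd (card C))"
  by (simp add: union3_closed_def card_Un_disjoint Int_Un_distrib2)

lemma union3_closed_even_card: "union3_closed (\<lambda>C. even (card C))"
  by (simp add: union3_closed_def card_Un_disjoint Int_Un_distrib2)

lemma card_filter_orbits_merge:
  assumes pf: "permutation f" and pg: "permutation g"
    and agree: "\<And>e. e \<notin> {u, v, w} \<Longrightarrow> g e = f e"
    and rot: "g u = f v" "g v = f w" "g w = f u"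
    and P: "union3_closed P" and three: "card {C \<in> orbit f ` {u, v, w}. P C} = 3"
  shows "1 \<le> card {C \<in> orbit g ` {u, v, w}. P C}"
proof -
  have "card {C \<in> orbit f ` {u, v, w}. P C} \<le> card (orbit f ` {u, v, w})"
    by (intro card_mono) auto
  moreover have "card (orbit f ` {u, v, w}) \<le> 3"
    by (simp add: card_insert_if)
  ultimately have card3: "card (orbit f ` {u, v, w}) = 3"
    using three by linarith
  then have all: "{C \<in> orbit f ` {u, v, w}. P C} = orbit f ` {u, v, w}"
    using three by (intro card_subset_eq) auto
  from card3 have dist: "orbit f u \<noteq> orbit f v" "orbit f v \<noteq> orbit f w" "orbit f u \<noteq> orbit f w"
    by (auto simp: card_insert_if split: if_splits)
  have PP: "P (orbit f u)" "P (orbit f v)" "P (orbit f w)"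
    using all by blast+
  have "P (orbit f u \<union> orbit f v \<union> orbit f w)"
    using P PP dist orbits_disjoint[OF pf] finite_orbit permutation_self_in_orbit[OF pf]
    unfolding union3_closed_def by metis
  then have "{C \<in> orbit g ` {u, v, w}. P C} = {orbit f u \<union> orbit f v \<union> orbit f w}"
    using orbits_merge[OF pf pg dist agree rot] by auto
  then show ?thesis by simp
qed

lemma card_filter_orbits_comp_cycle3:
  assumes A: "finite A" and f: "f permutes A" and uvw: "distinct [u, v, w]" "{u, v, w} \<subseteq> A"
    and P: "union3_closed P"
  shows "\<bar>int (card {C \<in> orbit (f \<circ> cycle_of_list [u, v, w]) ` A. P C})
          - int (card {C \<in> orbit f ` A. P C})\<bar> \<le> 2"
proof -
  define g where "g = f \<circ> cycle_of_list [u, v, w]"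
  define D where "D = {u, v, w}"
  have pf: "permutation f" using f A permutation_permutes by blast
  have pg: "permutation g" unfolding g_def by (intro permutation_compose pf permutation_of_cycle)
  note c3 = cycle_of_list_3[OF uvw(1)]
  have agree: "\<And>e. e \<notin> D \<Longrightarrow> g e = f e" and agree': "\<And>e. e \<notin> D \<Longrightarrow> f e = g e"
    unfolding g_def D_def using c3(4) by auto
  have rot: "g u = f v" "g v = f w" "g w = f u" unfolding g_def using c3 by simp_all
  have same: "{C \<in> orbit g ` A. C \<inter> D = {} \<and> P C} = {C \<in> orbit f ` A. C \<inter> D = {} \<and> P C}"
    using filter_orbits_disjoint_subset[OF pf agree] filter_orbits_disjoint_subset[OF pg agree']
    by (rule subset_antisym[rotated])
  define c where "c = card {C \<in> orbit f ` A. C \<inter> D = {} \<and> P C}"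
  define a where "a = card {C \<in> orbit f ` D. P C}"
  define b where "b = card {C \<in> orbit g ` D. P C}"
  have DA: "D \<subseteq> A" using uvw(2) unfolding D_def .
  have "card {C \<in> orbit f ` A. P C} = c + a"
    unfolding a_def c_def using card_filter_orbits_split[OF pf A DA] .
  moreover have "card {C \<in> orbit g ` A. P C} = c + b"
    unfolding b_def c_def same[symmetric] using card_filter_orbits_split[OF pg A DA] .
  moreover have "a \<le> 3" "b \<le> 3"
    unfolding a_def b_def D_def by (rule card_filter_orbits_le_3)+
  moreover have "a = 3 \<Longrightarrow> 1 \<le> b"
    using card_filter_orbits_merge[OF pf pg _ rot P] agree unfolding a_def b_def D_def by blast
  moreover have "b = 3 \<Longrightarrow> 1 \<le> a"
    \<comment> \<open>f arises from g by the inverse 3-cycle (u w v)\<close>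
    using card_filter_orbits_merge[OF pg pf _ _ _ _ P, of u w v] agree' rot
    unfolding a_def b_def D_def by (simp add: insert_commute)
  ultimately show ?thesis unfolding g_def[symmetric] by arith
qed

section \<open>Block transpositions\<close>

lemma transp_step_iff:
  "transp_step s t \<longleftrightarrow>
    (\<exists>Q B1 B2 R. s = Q @ B1 @ B2 @ R \<and> t = Q @ B2 @ B1 @ R \<and> B1 \<noteq> [] \<and> B2 \<noteq> [])"
proof
  assume "transp_step s t"
  then obtain i j k where ijk: "1 \<le> i" "i \<le> j" "j < k" "k \<le> length s"
    and t: "t = block_transp i j k s"
    unfolding transp_step_def by blast
  define Q B1 B2 R where "Q = take (i - 1) s" and "B1 = drop (i - 1) (take j s)"
    and "B2 = drop j (take k s)" and "R = drop k s"
  have "take j s = Q @ B1" "take k s = take j s @ B2"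
    unfolding Q_def B1_def B2_def using ijk
    by (metis append_take_drop_id diff_le_self le_trans min.absorb1 take_take less_imp_le)+
  then have "s = Q @ B1 @ B2 @ R" unfolding R_def by (metis append.assoc append_take_drop_id)
  moreover have "t = Q @ B2 @ B1 @ R"
    unfolding t block_transp_def Q_def B1_def B2_def R_def ..
  moreover have "B1 \<noteq> []" "B2 \<noteq> []" unfolding B1_def B2_def using ijk by auto
  ultimately show "\<exists>Q B1 B2 R. s = Q @ B1 @ B2 @ R \<and> t = Q @ B2 @ B1 @ R \<and> B1 \<noteq> [] \<and> B2 \<noteq> []"
    by blast
next
  assume "\<exists>Q B1 B2 R. s = Q @ B1 @ B2 @ R \<and> t = Q @ B2 @ B1 @ R \<and> B1 \<noteq> [] \<and> B2 \<noteq> []"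
  then obtain Q B1 B2 R where s: "s = Q @ B1 @ B2 @ R" and t: "t = Q @ B2 @ B1 @ R"
    and ne: "B1 \<noteq> []" "B2 \<noteq> []" by blast
  let ?i = "length Q + 1" and ?j = "length Q + length B1" and ?k = "length Q + length B1 + length B2"
  have "t = block_transp ?i ?j ?k s" unfolding s t block_transp_def by simp
  moreover have "1 \<le> ?i" "?i \<le> ?j" "?j < ?k" "?k \<le> length s"
    using ne unfolding s by (auto simp: Suc_le_eq)
  ultimately show "transp_step s t" unfolding transp_step_def by blast
qed

lemma transp_step_mset: "transp_step s t \<Longrightarrow> mset t = mset s"
  unfolding transp_step_iff by (elim exE conjE) (simp add: ac_simps)

lemma transp_step_Cons:
  assumes "transp_step s t"
  shows "transp_step (a # s) (a # t)"
proof -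
  obtain Q B1 B2 R where "s = Q @ B1 @ B2 @ R" "t = Q @ B2 @ B1 @ R" "B1 \<noteq> []" "B2 \<noteq> []"
    using assms unfolding transp_step_iff by blast
  then show ?thesis
    unfolding transp_step_iff by (intro exI[of _ "a # Q"] exI[of _ B1] exI[of _ B2] exI[of _ R]) simp
qed

lemma transp_steps_Cons: "(transp_step ^^ m) s t \<Longrightarrow> (transp_step ^^ m) (a # s) (a # t)"
proof (induction m arbitrary: t)
  case (Suc m)
  then obtain y where "(transp_step ^^ m) s y" "transp_step y t" by (elim relpowp_Suc_E)
  then show ?case using Suc.IH transp_step_Cons by (intro relpowp_Suc_I)
qed simp

lemma transp_steps_mset: "(transp_step ^^ m) s t \<Longrightarrow> mset t = mset s"
proof (induction m arbitrary: t)
  case (Suc m)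
  then obtain y where "(transp_step ^^ m) s y" "transp_step y t" by (elim relpowp_Suc_E)
  then show ?case using Suc.IH transp_step_mset by metis
qed simp

lemma transp_step_move_to_front: "P \<noteq> [] \<Longrightarrow> transp_step (P @ a # R) (a # P @ R)"
  unfolding transp_step_iff by (intro exI[of _ "[]"] exI[of _ P] exI[of _ "[a]"] exI[of _ R]) simp

lemma transp_steps_to_sorted:
  "distinct s \<Longrightarrow> set s = {a..<b} \<Longrightarrow> \<exists>m. (transp_step ^^ m) s [a..<b]"
proof (induction "b - a" arbitrary: s a)
  case 0
  then have "s = []" by simp
  then show ?case using 0 by (intro exI[of _ 0]) simp
next
  case (Suc d)
  then have "a < b" by simp
  then have "a \<in> set s" using Suc.prems(2) by simp
  then obtain P R where s: "s = P @ a # R" by (metis split_list)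
  have "set (P @ R) = set s - {a}" using Suc.prems(1) unfolding s by auto
  also have "\<dots> = {Suc a..<b}" using Suc.prems(2) by auto
  finally have "set (P @ R) = {Suc a..<b}" .
  moreover have "distinct (P @ R)" using Suc.prems(1) unfolding s by simp
  moreover have "d = b - Suc a" using Suc.hyps(2) by simp
  ultimately obtain m where "(transp_step ^^ m) (P @ R) [Suc a..<b]"
    using Suc.hyps(1) by blast
  then have m: "(transp_step ^^ m) (a # P @ R) [a..<b]"
    unfolding upt_conv_Cons[OF \<open>a < b\<close>] by (rule transp_steps_Cons)
  show ?case
  proof (cases "P = []")
    case True
    then show ?thesis using m unfolding s by auto
  next
    case False
    then have "transp_step s (a # P @ R)" unfolding s by (rule transp_step_move_to_front)
    then show ?thesis using m by (blast intro: relpowp_Suc_I2)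
  qed
qed

section \<open>The lower bound\<close>

lemma perm_cycles_eq: "perm_cycles p A = orbit p ` A"
  by (simp add: perm_cycles_def)

lemma card_filter_cycles_transp_step:
  assumes A: "finite A" and \<alpha>: "\<alpha> permutes A" and \<gamma>: "\<gamma> permutes A"
    and s: "distinct (a # s)" "set (a # s) \<subseteq> A" and st: "transp_step s t"
    and P: "union3_closed P"
  shows "\<bar>int (card {C \<in> perm_cycles (\<alpha> \<circ> cycle_of_list (a # t) \<circ> \<gamma>) A. P C})
          - int (card {C \<in> perm_cycles (\<alpha> \<circ> cycle_of_list (a # s) \<circ> \<gamma>) A. P C})\<bar> \<le> 2"
proof -
  obtain Q B1 B2 R where st': "s = Q @ B1 @ B2 @ R" "t = Q @ B2 @ B1 @ R" "B1 \<noteq> []" "B2 \<noteq> []"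
    using st unfolding transp_step_iff by blast
  define x y z where "x = last (a # Q)" and "y = last B1" and "z = last B2"
  have swap: "cycle_of_list (a # t) = cycle_of_list (a # s) \<circ> cycle_of_list [x, y, z]"
    using cycle_of_list_swap_blocks[of "a # Q" B1 B2 R] s(1) st' unfolding x_def y_def z_def by simp
  have "x \<in> set (a # Q)" "y \<in> set B1" "z \<in> set B2"
    unfolding x_def y_def z_def using st' by (intro last_in_set, simp)+
  then have xyz: "distinct [x, y, z]" "{x, y, z} \<subseteq> A"
    using s unfolding st' by auto
  define f where "f = \<alpha> \<circ> cycle_of_list (a # s) \<circ> \<gamma>"
  have bij: "bij (inv \<gamma>)" using \<gamma> by (simp add: bij_imp_bij_inv permutes_bij)
  have conj: "inv \<gamma> \<circ> cycle_of_list [x, y, z] \<circ> \<gamma> = cycle_of_list [inv \<gamma> x, inv \<gamma> y, inv \<gamma> z]"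
    using conjugation_of_cycle[OF xyz(1) bij] by (simp only: list.map inv_inv_eq[OF permutes_bij[OF \<gamma>]])
  have regroup: "\<alpha> \<circ> (cycle_of_list (a # s) \<circ> c) \<circ> \<gamma> = f \<circ> (inv \<gamma> \<circ> c \<circ> \<gamma>)" for c
    unfolding f_def by (simp add: fun_eq_iff permutes_inverses(1)[OF \<gamma>])
  have "f permutes A"
    unfolding f_def using \<alpha> \<gamma> s cycle_permutes[of "a # s"]
    by (intro permutes_compose) (auto intro: permutes_subset)
  moreover have "distinct [inv \<gamma> x, inv \<gamma> y, inv \<gamma> z]"
    using xyz(1) bij_is_inj[OF bij] by (auto dest: injD)
  moreover have "{inv \<gamma> x, inv \<gamma> y, inv \<gamma> z} \<subseteq> A"
    using xyz(2) permutes_in_image[OF permutes_inv[OF \<gamma>]] by auto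
  ultimately show ?thesis
    unfolding perm_cycles_eq swap regroup conj f_def[symmetric]
    by (rule card_filter_orbits_comp_cycle3[OF A _ _ _ P])
qed

lemma card_filter_cycles_transp_steps:
  assumes A: "finite A" and \<alpha>: "\<alpha> permutes A" and \<gamma>: "\<gamma> permutes A"
    and s: "distinct (a # s)" "set (a # s) \<subseteq> A" and P: "union3_closed P"
  shows "(transp_step ^^ m) s t \<Longrightarrow>
    \<bar>int (card {C \<in> perm_cycles (\<alpha> \<circ> cycle_of_list (a # t) \<circ> \<gamma>) A. P C})
      - int (card {C \<in> perm_cycles (\<alpha> \<circ> cycle_of_list (a # s) \<circ> \<gamma>) A. P C})\<bar> \<le> 2 * int m"
proof (induction m arbitrary: t)
  case (Suc m)
  then obtain y where sy: "(transp_step ^^ m) s y" and yt: "transp_step y t" by (elim relpowp_Suc_E)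
  have "mset (a # y) = mset (a # s)" using transp_steps_mset[OF sy] by simp
  then have "distinct (a # y)" "set (a # y) \<subseteq> A"
    using s by (metis mset_eq_imp_distinct_iff, metis mset_eq_setD)
  then have "\<bar>int (card {C \<in> perm_cycles (\<alpha> \<circ> cycle_of_list (a # t) \<circ> \<gamma>) A. P C})
      - int (card {C \<in> perm_cycles (\<alpha> \<circ> cycle_of_list (a # y) \<circ> \<gamma>) A. P C})\<bar> \<le> 2"
    by (rule card_filter_cycles_transp_step[OF A \<alpha> \<gamma> _ _ yt P])
  with Suc.IH[OF sy] show ?case unfolding of_nat_Suc abs_le_iff by auto
qed simp

lemma half_max3_le:
  fixes x y z :: int and m :: nat
  assumes "\<bar>x\<bar> \<le> 2 * int m" "\<bar>y\<bar> \<le> 2 * int m" "\<bar>z\<bar> \<le> 2 * int m"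
  shows "real (max (max (nat \<bar>x\<bar>) (nat \<bar>y\<bar>)) (nat \<bar>z\<bar>)) / 2 \<le> real m"
proof -
  have "nat \<bar>x\<bar> \<le> 2 * m" "nat \<bar>y\<bar> \<le> 2 * m" "nat \<bar>z\<bar> \<le> 2 * m"
    using assms by linarith+
  then have "real (max (max (nat \<bar>x\<bar>) (nat \<bar>y\<bar>)) (nat \<bar>z\<bar>)) \<le> real (2 * m)"
    by (intro of_nat_mono) simp
  then show ?thesis by simp
qed

lemma card_filter_cycles_diff_le_td:
  fixes s :: "nat list" and \<gamma> :: "nat \<Rightarrow> nat"
  assumes "length s = n" "distinct s" "set s = {1..n}" "\<gamma> permutes {0..n}" "union3_closed P"
  shows "\<bar>int (card {C \<in> perm_cycles (cycle_of_list (rev [0..<n+1]) \<circ> cycle_of_list (0 # s) \<circ> \<gamma>) {0..n}. P C})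
      - int (card {C \<in> perm_cycles \<gamma> {0..n}. P C})\<bar> \<le> 2 * int (td s)"
proof -
  let ?\<alpha> = "cycle_of_list (rev [0..<n+1])"
  have "set s = {1..<n+1}" using assms(3) by auto
  then have "\<exists>m. (transp_step ^^ m) s [1..<n+1]" using transp_steps_to_sorted[OF assms(2)] by blast
  then have sorts: "(transp_step ^^ td s) s [1..<n+1]"
    unfolding td_def assms(1) by (rule LeastI_ex)
  have "set (rev [0..<n+1]) = {0..n}" by auto
  then have \<alpha>: "?\<alpha> permutes {0..n}" using cycle_permutes[of "rev [0..<n+1]"] by simp
  have "?\<alpha> \<circ> cycle_of_list [0..<n+1] = id" by (rule cycle_of_list_rev_comp) simp
  moreover have "0 # [1..<n+1] = [0..<n+1]" by (simp add: upt_rec)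
  ultimately have "?\<alpha> \<circ> cycle_of_list (0 # [1..<n+1]) = id" by metis
  then show ?thesis
    using card_filter_cycles_transp_steps[OF _ \<alpha> assms(4) _ _ assms(5) sorts, of 0] assms(2,3)
    by (simp add: abs_minus_commute)
qed

theorem theorem1:
  fixes s :: "nat list" and n :: nat
  assumes "length s = n" and "distinct s" and "set s = {1..n}"
  shows "\<forall>\<gamma>. \<gamma> permutes {0..n} \<longrightarrow>
    real (td s) \<ge>
      real (max (max
        (nat \<bar>int (num_cycles (cycle_of_list (rev [0..<n+1]) \<circ> cycle_of_list (0 # s) \<circ> \<gamma>) {0..n})
              - int (num_cycles \<gamma> {0..n})\<bar>)
        (nat \<bar>int (num_odd_cycles (cycle_of_list (rev [0..<n+1]) \<circ> cycle_of_list (0 # s) \<circ> \<gamma>) {0..n})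
              - int (num_odd_cycles \<gamma> {0..n})\<bar>))
        (nat \<bar>int (num_even_cycles (cycle_of_list (rev [0..<n+1]) \<circ> cycle_of_list (0 # s) \<circ> \<gamma>) {0..n})
              - int (num_even_cycles \<gamma> {0..n})\<bar>)) / 2"
  using card_filter_cycles_diff_le_td[OF assms _ union3_closed_True]
    card_filter_cycles_diff_le_td[OF assms _ union3_closed_odd_card]
    card_filter_cycles_diff_le_td[OF assms _ union3_closed_even_card]
  unfolding num_cycles_def num_odd_cycles_def num_even_cycles_def
  by (intro allI impI half_max3_le) simp_all

end
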